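(* Let $\mathcal{T}$ be a tree with costs $c:V(\mathcal{T})\to\mathbb{R}_{>0}$, let $a\ge 0$ be such that some vertex $v$ has $c(v)\le a$, and let $k=k(\mathcal{T},c)$. Construct $\mathcal{X},\mathcal{Y},\mathcal{Z}$ and $\mathcal{T}_{\mathcal{Z}}$ as described (for any choices made in the construction). Then $|V(\mathcal{T}_{\mathcal{Z}})|\le 4k-3$.
   Context: For $t\ge 0$, a heavy module with respect to $t$ is a set $H\subseteq V(\mathcal{T})$ with $\mathcal{T}[H]$ connected, $c(v)>t$ for all $v\in H$, and maximal with these properties; $k(\mathcal{T},c,t)$ is the number of such modules and $k(\mathcal{T},c)=\max_{t\ge0}k(\mathcal{T},c,t)$. For $S\subseteq V(\mathcal{T})$, $\mathcal{T}\langle S\rangle$ is the minimal subtree containing $S$; for vertices $u,v$, $\mathcal{P}_{\mathcal{T}}(u,v)$ is the set of vertices on the $u$–$v$ path excluding $u,v$. Construction: $\mathcal{X}$ contains one arbitrarily chosen vertex from each heavy module with respect to $a$. $\mathcal{Y}=\mathcal{X}\cup\{v\in V(\mathcal{T}\langle\mathcal{X}\rangle):\deg_{\mathcal{T}\langle\mathcal{X}\rangle}(v)\ge 3\}$. $\mathcal{Z}$ consists of $\mathcal{Y}$ together with, for every pair $u,v\in\mathcal{Y}$ with $\mathcal{P}_{\mathcal{T}}(u,v)\ne\emptyset$ and $\mathcal{P}_{\mathcal{T}}(u,v)\cap\mathcal{Y}=\emptyset$, a vertex of $\mathcal{P}_{\mathcal{T}}(u,v)$ of minimum cost. The auxiliary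 tree is $\mathcal{T}_{\mathcal{Z}}$ with vertex set $\mathcal{Z}$ and edges $uv$ for all $u,v\in\mathcal{Z}$ with $\mathcal{P}_{\mathcal{T}}(u,v)\cap\mathcal{Z}=\emptyset$. *)

theory Defs
  imports Complex_Main
begin

definition is_walk :: "('a \<Rightarrow> 'a \<Rightarrow> bool) \<Rightarrow> 'a list \<Rightarrow> bool" where
  "is_walk E xs \<longleftrightarrow> xs \<noteq> [] \<and> (\<forall>i. Suc i < length xs \<longrightarrow> E (xs ! i) (xs ! Suc i))"

definition is_path :: "('a \<Rightarrow> 'a \<Rightarrow> bool) \<Rightarrow> 'a list \<Rightarrow> bool" where
  "is_path E xs \<longleftrightarrow> is_walk E xs \<and> distinct xs"

definition is_cycle :: "('a \<Rightarrow> 'a \<Rightarrow> bool) \<Rightarrow> 'a list \<Rightarrow> bool" where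
  "is_cycle E xs \<longleftrightarrow> is_path E xs \<and> length xs \<ge> 3 \<and> E (last xs) (hd xs)"

definition simple_graph :: "'a set \<Rightarrow> ('a \<Rightarrow> 'a \<Rightarrow> bool) \<Rightarrow> bool" where
  "simple_graph V E \<longleftrightarrow> finite V \<and> (\<forall>u v. E u v \<longrightarrow> u \<in> V \<and> v \<in> V \<and> E v u \<and> u \<noteq> v)"

definition induced_connected :: "('a \<Rightarrow> 'a \<Rightarrow> bool) \<Rightarrow> 'a set \<Rightarrow> bool" where
  "induced_connected E H \<longleftrightarrow>
     (\<forall>u\<in>H. \<forall>v\<in>H. \<exists>xs. is_path E xs \<and> hd xs = u \<and> last xs = v \<and> set xs \<subseteq> H)"

definition is_tree :: "'a set \<Rightarrow> ('a \<Rightarrow> 'a \<Rightarrow> bool) \<Rightarrow> bool" where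
  "is_tree V E \<longleftrightarrow> simple_graph V E \<and> V \<noteq> {} \<and> induced_connected E V \<and> (\<nexists>xs. is_cycle E xs)"

text \<open>P_T(u,v): inner vertices of the u--v path (unique in a tree), excluding u and v.\<close>
definition path_interior :: "('a \<Rightarrow> 'a \<Rightarrow> bool) \<Rightarrow> 'a \<Rightarrow> 'a \<Rightarrow> 'a set" where
  "path_interior E u v = {w. \<exists>xs. is_path E xs \<and> hd xs = u \<and> last xs = v \<and> w \<in> set xs \<and> w \<noteq> u \<and> w \<noteq> v}"

text \<open>Vertex set of the minimal subtree T<S> containing S (for S in a tree).\<close>
definition span_vertices :: "('a \<Rightarrow> 'a \<Rightarrow> bool) \<Rightarrow> 'a set \<Rightarrow> 'a set" where
  "span_vertices E S = S \<union> (\<Union>u\<in>S. \<Union>v\<in>S. path_interior E u v)"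

definition deg_in :: "('a \<Rightarrow> 'a \<Rightarrow> bool) \<Rightarrow> 'a set \<Rightarrow> 'a \<Rightarrow> nat" where
  "deg_in E W v = card {w \<in> W. E v w}"

definition heavy_module :: "'a set \<Rightarrow> ('a \<Rightarrow> 'a \<Rightarrow> bool) \<Rightarrow> ('a \<Rightarrow> real) \<Rightarrow> real \<Rightarrow> 'a set \<Rightarrow> bool" where
  "heavy_module V E c t H \<longleftrightarrow>
     H \<subseteq> V \<and> H \<noteq> {} \<and> induced_connected E H \<and> (\<forall>v\<in>H. c v > t) \<and>
     (\<forall>H'. H \<subseteq> H' \<and> H' \<subseteq> V \<and> H' \<noteq> {} \<and> induced_connected E H' \<and> (\<forall>v\<in>H'. c v > t) \<longrightarrow> H' = H)"

definition k_t :: "'a set \<Rightarrow> ('a \<Rightarrow> 'a \<Rightarrow> bool) \<Rightarrow> ('a \<Rightarrow> real) \<Rightarrow> real \<Rightarrow> nat" where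
  "k_t V E c t = card {H. heavy_module V E c t H}"

text \<open>k(T,c) = max over t \<ge> 0 of k(T,c,t) (finitely many values for a finite tree).\<close>
definition k_max :: "'a set \<Rightarrow> ('a \<Rightarrow> 'a \<Rightarrow> bool) \<Rightarrow> ('a \<Rightarrow> real) \<Rightarrow> nat" where
  "k_max V E c = Max {k_t V E c t | t. t \<ge> 0}"

end

theory Submission
  imports Defs
begin

(* Root the tree at a vertex r of X. The span of X is then the union of the root paths of the
   vertices of X, and every vertex of Y other than r has a nearest proper ancestor in Y, its
   Y-parent. A vertex of Y - X has degree at least 3 in the span, so it has at least two
   Y-children; counting Y-parents gives |Y| <= 2|X| - 1. Two vertices of Y joined by a path
   without inner vertices in Y are Y-parent and Y-child, since otherwise the vertex where the
   path turns downwards would be a branch vertex of the span. Hence Z adds at most |Y| - 1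
   vertices to Y, and |Z| <= 4|X| - 3 <= 4k - 3 because X meets every heavy module in exactly
   one vertex. *)

lemma is_walk_iff_successively: "is_walk E xs \<longleftrightarrow> xs \<noteq> [] \<and> successively E xs"
  unfolding is_walk_def successively_conv_nth by auto

lemma is_path_iff_successively:
  "is_path E xs \<longleftrightarrow> xs \<noteq> [] \<and> successively E xs \<and> distinct xs"
  unfolding is_path_def is_walk_iff_successively by auto

lemma is_path_take: "is_path E xs \<Longrightarrow> 0 < n \<Longrightarrow> is_path E (take n xs)"
  unfolding is_path_iff_successively
  by (metis append_take_drop_id successively_append_iff distinct_take take_eq_Nil neq0_conv)

lemma is_path_drop: "is_path E xs \<Longrightarrow> n < length xs \<Longrightarrow> is_path E (drop n xs)"
  unfolding is_path_iff_successively
  by (metis append_take_drop_id successively_append_iff distinct_drop drop_eq_Nil not_le)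

lemma is_path_ConsD: "is_path E (x # xs) \<Longrightarrow> xs \<noteq> [] \<Longrightarrow> is_path E xs"
  unfolding is_path_iff_successively by (simp add: successively_Cons)

lemma symmetric_edges: "simple_graph V E \<Longrightarrow> E x y \<Longrightarrow> E y x"
  unfolding simple_graph_def by blast

lemma is_path_set_subset: "simple_graph V E \<Longrightarrow> is_path E xs \<Longrightarrow> hd xs \<in> V \<Longrightarrow> set xs \<subseteq> V"
proof (induction xs rule: induct_list012)
  case (3 x y zs)
  then show ?case by (auto simp: is_path_iff_successively simple_graph_def)
qed simp_all

lemma is_path_hd_eq_last: "is_path E xs \<Longrightarrow> hd xs = last xs \<Longrightarrow> xs = [hd xs]"
  unfolding is_path_iff_successively by (cases xs) (auto split: if_splits)

lemma cycle_of_two_paths: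
  assumes sym: "\<And>x y. E x y \<Longrightarrow> E y x"
    and p: "is_path E ((u # as) @ [w])" and q: "is_path E (u # bs @ [w])"
    and disj: "set as \<inter> set bs = {}" and ne: "as @ bs \<noteq> []"
  shows "is_cycle E ((u # as) @ rev (bs @ [w]))"
proof -
  have p_succ: "successively E (u # as)" "E (last (u # as)) w"
    using p unfolding is_path_iff_successively successively_append_iff by auto
  have "successively E (bs @ [w])"
    using q by (auto simp: is_path_iff_successively successively_Cons)
  then have "successively E (rev (bs @ [w]))"
    by (subst successively_rev) (auto elim: successively_mono intro: sym)
  with p_succ have "successively E ((u # as) @ rev (bs @ [w]))"
    by (simp only: successively_append_iff) simp
  moreover have "E (hd (bs @ [w])) u"
    using q by (cases bs) (auto simp: is_path_iff_successively intro: sym)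
  ultimately show ?thesis
    using p q disj ne by (auto simp: is_cycle_def is_path_iff_successively last_rev Suc_le_eq)
qed

lemma diverging_paths_cycle:
  assumes sym: "\<And>x y. E x y \<Longrightarrow> E y x"
    and p: "is_path E (u # as)" and q: "is_path E (u # bs)"
    and ne: "as \<noteq> []" "bs \<noteq> []" and diverge: "hd as \<noteq> hd bs" and meet: "last as = last bs"
  shows "\<exists>c. is_cycle E c"
proof -
  have "\<exists>z\<in>set as. z \<in> set bs"
    using ne meet last_in_set by metis
  then obtain as1 w as2 where as: "as = as1 @ w # as2" "w \<in> set bs" "\<forall>z\<in>set as1. z \<notin> set bs"
    by (rule split_list_first_propE)
  obtain bs1 bs2 where bs: "bs = bs1 @ w # bs2"
    using as(2) split_list by metis
  have "is_path E (take (length as1 + 2) (u # as))"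
    using p by (rule is_path_take) simp
  then have p': "is_path E ((u # as1) @ [w])"
    using as(1) by simp
  have "is_path E (take (length bs1 + 2) (u # bs))"
    using q by (rule is_path_take) simp
  then have q': "is_path E (u # bs1 @ [w])"
    using bs by simp
  have "set as1 \<inter> set bs1 = {}"
    using as(3) bs by auto
  moreover have "as1 @ bs1 \<noteq> []"
    using diverge as(1) bs by auto
  ultimately show ?thesis
    using cycle_of_two_paths[OF sym p' q'] by blast
qed

lemma acyclic_path_unique:
  assumes "simple_graph V E" "\<nexists>c. is_cycle E c"
  shows "is_path E xs \<Longrightarrow> is_path E ys \<Longrightarrow> hd xs = hd ys \<Longrightarrow> last xs = last ys \<Longrightarrow> xs = ys"
proof (induction xs arbitrary: ys)
  case Nil
  then show ?case by (simp add: is_path_iff_successively)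
next
  case (Cons u xs)
  have sym: "\<And>x y. E x y \<Longrightarrow> E y x"
    using symmetric_edges[OF assms(1)] .
  obtain ys' where ys: "ys = u # ys'"
    using Cons.prems by (cases ys) (auto simp: is_path_iff_successively)
  consider "xs = []" | "ys' = []" | "xs \<noteq> []" "ys' \<noteq> []"
    by blast
  then show ?case
  proof cases
    case 1
    then show ?thesis
      using Cons.prems is_path_hd_eq_last[of E ys] by simp
  next
    case 2
    then show ?thesis
      using Cons.prems ys is_path_hd_eq_last[of E "u # xs"] by simp
  next
    case 3
    have "is_path E xs" "is_path E ys'" "last xs = last ys'"
      using 3 Cons.prems is_path_ConsD ys by auto
    moreover have "hd xs = hd ys'"
      using diverging_paths_cycle[OF sym Cons.prems(1) Cons.prems(2)[unfolded ys]] 3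
        \<open>last xs = last ys'\<close> assms(2) by blast
    ultimately show ?thesis
      using Cons.IH ys by simp
  qed
qed

locale rooted_tree =
  fixes V :: "'a set" and E :: "'a \<Rightarrow> 'a \<Rightarrow> bool" and r :: 'a
  assumes tree: "is_tree V E" and root_in_V: "r \<in> V"
begin

lemma tree_simple: "simple_graph V E"
  using tree unfolding is_tree_def by blast

lemma finite_V: "finite V"
  using tree_simple unfolding simple_graph_def by blast

lemma acyclic: "\<nexists>c. is_cycle E c"
  using tree unfolding is_tree_def by blast

definition root_path :: "'a \<Rightarrow> 'a list" where
  "root_path w = (THE p. is_path E p \<and> hd p = w \<and> last p = r)"

lemma root_path_ex1:
  assumes "w \<in> V"
  shows "\<exists>!p. is_path E p \<and> hd p = w \<and> last p = r"
proof -
  have "induced_connected E V"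
    using tree unfolding is_tree_def by blast
  then obtain p where p: "is_path E p" "hd p = w" "last p = r"
    using assms root_in_V unfolding induced_connected_def by blast
  show ?thesis
  proof (rule ex1I)
    show "is_path E p \<and> hd p = w \<and> last p = r"
      using p by blast
    show "q = p" if "is_path E q \<and> hd q = w \<and> last q = r" for q
      using acyclic_path_unique[OF tree_simple acyclic, of q p] that p by simp
  qed
qed

lemma
  assumes "w \<in> V"
  shows is_path_root_path: "is_path E (root_path w)"
    and hd_root_path: "hd (root_path w) = w"
    and last_root_path: "last (root_path w) = r"
proof -
  have "is_path E (root_path w) \<and> hd (root_path w) = w \<and> last (root_path w) = r"
    unfolding root_path_def by (rule theI'[OF root_path_ex1[OF assms]])
  then show "is_path E (root_path w)" "hd (root_path w) = w" "last (root_path w) = r"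
    by blast+
qed

lemma root_path_eqI: "w \<in> V \<Longrightarrow> is_path E p \<Longrightarrow> hd p = w \<Longrightarrow> last p = r \<Longrightarrow> root_path w = p"
  unfolding root_path_def by (rule the1_equality[OF root_path_ex1]) auto

lemma root_path_ne: "w \<in> V \<Longrightarrow> root_path w \<noteq> []"
  using is_path_root_path by (simp add: is_path_iff_successively)

lemma root_path_Cons: "w \<in> V \<Longrightarrow> root_path w = w # tl (root_path w)"
  using root_path_ne hd_root_path by (metis list.collapse)

lemma self_in_root_path: "w \<in> V \<Longrightarrow> w \<in> set (root_path w)"
  using root_path_ne hd_root_path by (metis list.set_sel(1))

lemma set_root_path_subset: "w \<in> V \<Longrightarrow> set (root_path w) \<subseteq> V"
  using is_path_set_subset[OF tree_simple is_path_root_path] hd_root_path by simp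

lemma root_path_root: "root_path r = [r]"
  by (rule root_path_eqI[OF root_in_V]) (auto simp: is_path_iff_successively)

lemma root_in_root_path: "w \<in> V \<Longrightarrow> r \<in> set (root_path w)"
  using is_path_root_path last_root_path
  by (metis is_path_iff_successively last_in_set)

lemma root_path_suffix:
  assumes "w \<in> V" and split: "root_path w = xs @ z # ys"
  shows "root_path z = z # ys"
proof (rule root_path_eqI)
  show "z \<in> V"
    using set_root_path_subset[OF \<open>w \<in> V\<close>] split by auto
  have "is_path E (drop (length xs) (root_path w))"
    using is_path_root_path[OF \<open>w \<in> V\<close>] by (rule is_path_drop) (simp add: split)
  then show "is_path E (z # ys)"
    using split by simp
  show "last (z # ys) = r"
    using last_root_path[OF \<open>w \<in> V\<close>] split by simp
qed simp

definition parent :: "'a \<Rightarrow> 'a" where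
  "parent w = hd (tl (root_path w))"

lemma
  assumes "w \<in> V" "w \<noteq> r"
  shows root_path_parent: "root_path w = w # root_path (parent w)"
    and parent_in_V: "parent w \<in> V"
    and edge_parent: "E w (parent w)"
proof -
  obtain z zs where z: "root_path w = w # z # zs"
    using root_path_Cons[OF assms(1)] last_root_path[OF assms(1)] assms(2)
    by (metis last.simps list.exhaust)
  then have parent: "parent w = z"
    unfolding parent_def by simp
  then show "root_path w = w # root_path (parent w)"
    using root_path_suffix[of w "[w]"] assms(1) z by simp
  show "parent w \<in> V"
    using set_root_path_subset[OF assms(1)] z parent by simp
  show "E w (parent w)"
    using is_path_root_path[OF assms(1)] z parent
    by (simp add: is_path_iff_successively)
qed

lemma parent_parent_neq:
  assumes "w \<in> V" "w \<noteq> r" "parent w \<noteq> r"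
  shows "parent (parent w) \<noteq> w"
proof
  assume "parent (parent w) = w"
  then have "root_path w = w # parent w # root_path w"
    using root_path_parent[OF assms(1,2)] root_path_parent[OF parent_in_V[OF assms(1,2)] assms(3)]
    by simp
  then show False
    using impossible_Cons[of "root_path w" "parent w # root_path w" w] by simp
qed

definition up_edge :: "'a \<Rightarrow> 'a \<Rightarrow> bool" where
  "up_edge a b \<longleftrightarrow> a \<in> V \<and> a \<noteq> r \<and> b = parent a"

lemma edge_up_or_down:
  assumes "E a b"
  shows "up_edge a b \<or> up_edge b a"
proof -
  have ab: "a \<in> V" "b \<in> V" "E b a" "a \<noteq> b"
    using tree_simple assms unfolding simple_graph_def by auto
  show ?thesis
  proof (cases "b \<in> set (root_path a)")
    case True
    then obtain xs ys where split: "root_path a = xs @ b # ys"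
      by (meson split_list)
    with root_path_Cons[OF ab(1)] ab(4) obtain xs' where xs': "xs = a # xs'"
      by (cases xs) auto
    have "xs' = []"
    proof (rule ccontr)
      assume "xs' \<noteq> []"
      \<comment> \<open>then the root path of a up to b, closed by the edge b a, is a cycle\<close>
      have "is_path E (take (length xs + 1) (root_path a))"
        using is_path_root_path[OF ab(1)] by (rule is_path_take) simp
      then have "is_cycle E (a # xs' @ [b])"
        using split xs' ab(3) \<open>xs' \<noteq> []\<close> by (simp add: is_cycle_def Suc_le_eq)
      then show False
        using acyclic by blast
    qed
    then have "a \<noteq> r" "b = parent a"
      using split xs' root_path_root unfolding parent_def by auto
    then show ?thesis
      using ab(1) unfolding up_edge_def by blast
  next
    case False
    have "is_path E (b # root_path a)"
      using is_path_root_path[OF ab(1)] False ab(3) root_path_ne[OF ab(1)] hd_root_path[OF ab(1)]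
      by (simp add: is_path_iff_successively successively_Cons)
    then have "root_path b = b # root_path a"
      using ab(1,2) last_root_path[OF ab(1)] root_path_ne[OF ab(1)] by (intro root_path_eqI) auto
    then have "b \<noteq> r" "a = parent b"
      using False root_in_root_path[OF ab(1)] hd_root_path[OF ab(1)] unfolding parent_def by auto
    then show ?thesis
      using ab(2) unfolding up_edge_def by blast
  qed
qed

lemma upward_path_prefix:
  "successively up_edge q \<Longrightarrow> q \<noteq> [] \<Longrightarrow> hd q \<in> V \<Longrightarrow> \<exists>rest. root_path (hd q) = q @ rest"
proof (induction q rule: induct_list012)
  case (2 w)
  then show ?case
    using root_path_Cons by auto
next
  case (3 w z zs)
  then have "w \<noteq> r" "z = parent w" "z \<in> V"
    unfolding up_edge_def using parent_in_V by auto
  then show ?case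
    using 3 root_path_parent[of w] by auto
qed simp

lemma no_climb_after_down_step:
  assumes p: "is_path E (x # ps @ t # qs)" and down: "up_edge (hd (ps @ [t])) x"
    and up: "successively up_edge (ps @ [t])"
  shows "ps = []"
proof (rule ccontr)
  assume "ps \<noteq> []"
  then obtain y ys where ps: "ps @ [t] = hd (ps @ [t]) # y # ys"
    by (cases ps; cases "tl ps @ [t]") auto
  have "up_edge (hd (ps @ [t])) y"
    using up by (subst (asm) ps) simp
  then have "y = x"
    using down unfolding up_edge_def by simp
  moreover have "y \<in> set (ps @ [t])"
    by (subst ps) simp
  ultimately show False
    using p by (auto simp: is_path_iff_successively)
qed

lemma path_up_down:
  "is_path E p \<Longrightarrow> \<exists>ps t qs. p = ps @ t # qs \<and>
     successively up_edge (ps @ [t]) \<and> successively up_edge (rev (t # qs))"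
proof (induction p)
  case Nil
  then show ?case
    by (simp add: is_path_iff_successively)
next
  case (Cons x p)
  show ?case
  proof (cases "p = []")
    case True
    then show ?thesis
      by (intro exI[of _ "[]"] exI[of _ x] exI[of _ "[]"]) simp
  next
    case False
    obtain ps t qs where p: "p = ps @ t # qs"
      and up: "successively up_edge (ps @ [t])" and down: "successively up_edge (rev (t # qs))"
      using Cons.IH is_path_ConsD[OF Cons.prems False] by blast
    have hd_peak: "hd (ps @ [t]) = hd p"
      using p by (cases ps) auto
    have "E x (hd p)"
      using Cons.prems False by (simp add: is_path_iff_successively successively_Cons)
    then consider "up_edge x (hd p)" | "up_edge (hd p) x"
      using edge_up_or_down by blast
    then show ?thesis
    proof cases
      case 1
      then have "successively up_edge ((x # ps) @ [t])"
        using up hd_peak by (simp add: successively_Cons)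
      then show ?thesis
        using p down by (metis append_Cons)
    next
      case 2
      then have "ps = []"
        using no_climb_after_down_step[of x ps t qs] Cons.prems p up hd_peak by simp
      then have "successively up_edge (rev (x # p))"
        using p down 2 by (simp add: successively_append_iff)
      then show ?thesis
        by (intro exI[of _ "[]"] exI[of _ x] exI[of _ p]) simp
    qed
  qed
qed

lemma upward_path_subset:
  "successively up_edge q \<Longrightarrow> q \<noteq> [] \<Longrightarrow> hd q \<in> V \<Longrightarrow> set q \<subseteq> set (root_path (hd q))"
  using upward_path_prefix by fastforce

lemma path_subset_root_paths:
  assumes "is_path E p" "hd p \<in> V" "last p \<in> V"
  shows "set p \<subseteq> set (root_path (hd p)) \<union> set (root_path (last p))"
proof -
  obtain ps t qs where p: "p = ps @ t # qs"
    and up: "successively up_edge (ps @ [t])" and down: "successively up_edge (rev (t # qs))"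
    using path_up_down[OF assms(1)] by blast
  have "hd (ps @ [t]) = hd p" "hd (rev (t # qs)) = last p"
    using p by (cases ps, auto simp: hd_rev)
  then have "set (ps @ [t]) \<subseteq> set (root_path (hd p))" "set (rev (t # qs)) \<subseteq> set (root_path (last p))"
    using upward_path_subset[OF up] upward_path_subset[OF down] assms(2,3) by auto
  then show ?thesis
    using p by auto
qed

lemma root_path_child_unique:
  assumes "y \<in> V" "c \<in> set (root_path y)" "c' \<in> set (root_path y)"
    and "c \<noteq> r" "c' \<noteq> r" "parent c = parent c'"
  shows "c = c'"
proof -
  have "\<exists>xs. root_path y = (xs @ [z]) @ root_path (parent z)"
    if z: "z \<in> set (root_path y)" "z \<noteq> r" for z
  proof -
    obtain xs zs where split: "root_path y = xs @ z # zs"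
      using split_list[OF z(1)] by blast
    have "z \<in> V"
      using set_root_path_subset[OF assms(1)] z(1) by blast
    then have "zs = root_path (parent z)"
      using root_path_suffix[OF assms(1) split] root_path_parent z(2) by simp
    then show ?thesis
      using split by simp
  qed
  then obtain xs xs' where "root_path y = (xs @ [c]) @ root_path (parent c)"
    "root_path y = (xs' @ [c']) @ root_path (parent c)"
    using assms by metis
  then show ?thesis
    by simp
qed

end

locale rooted_span = rooted_tree +
  fixes X Y :: "'a set"
  assumes X_subset_V: "X \<subseteq> V" and root_in_X: "r \<in> X"
    and Y_eq: "Y = X \<union> {v \<in> span_vertices E X. deg_in E (span_vertices E X) v \<ge> 3}"
begin

abbreviation S :: "'a set" where
  "S \<equiv> span_vertices E X"

lemma span_eq_root_paths: "S = (\<Union>x\<in>X. set (root_path x))"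
proof
  show "(\<Union>x\<in>X. set (root_path x)) \<subseteq> S"
  proof
    fix w assume "w \<in> (\<Union>x\<in>X. set (root_path x))"
    then obtain x where x: "x \<in> X" "w \<in> set (root_path x)"
      by blast
    then have "w = x \<or> w = r \<or> w \<in> path_interior E x r"
      using X_subset_V is_path_root_path hd_root_path last_root_path
      unfolding path_interior_def by blast
    then show "w \<in> S"
      using x(1) root_in_X unfolding span_vertices_def by blast
  qed
next
  show "S \<subseteq> (\<Union>x\<in>X. set (root_path x))"
  proof
    fix w assume "w \<in> S"
    then consider "w \<in> X" | x x' where "x \<in> X" "x' \<in> X" "w \<in> path_interior E x x'"
      unfolding span_vertices_def by blast
    then show "w \<in> (\<Union>x\<in>X. set (root_path x))"
    proof cases
      case 1
      then show ?thesis
        using X_subset_V self_in_root_path by blast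
    next
      case 2
      then obtain p where "is_path E p" "hd p = x" "last p = x'" "w \<in> set p"
        unfolding path_interior_def by blast
      then show ?thesis
        using path_subset_root_paths 2 X_subset_V by blast
    qed
  qed
qed

lemma span_root_path_closed:
  assumes "w \<in> S"
  shows "set (root_path w) \<subseteq> S"
proof -
  obtain x where x: "x \<in> X" "w \<in> set (root_path x)"
    using assms span_eq_root_paths by blast
  then obtain xs ys where split: "root_path x = xs @ w # ys"
    by (meson split_list)
  then have "set (root_path w) \<subseteq> set (root_path x)"
    using root_path_suffix X_subset_V x(1) by auto
  then show ?thesis
    using x(1) span_eq_root_paths by blast
qed

lemma span_subset_V: "S \<subseteq> V"
  using span_eq_root_paths set_root_path_subset X_subset_V by blast

lemma X_subset_Y: "X \<subseteq> Y"
  using Y_eq by blast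

lemma root_in_Y: "r \<in> Y"
  using root_in_X X_subset_Y by blast

lemma Y_subset_span: "Y \<subseteq> S"
  using Y_eq span_eq_root_paths self_in_root_path X_subset_V by blast

lemma finite_Y: "finite Y"
  using Y_subset_span span_subset_V finite_V by (meson finite_subset)

lemma branch_in_Y:
  assumes t: "t \<in> S" "t \<noteq> r" and children: "a \<in> S" "b \<in> S" "a \<noteq> b" "up_edge a t" "up_edge b t"
  shows "t \<in> Y"
proof -
  have tV: "t \<in> V"
    using t(1) span_subset_V by blast
  have a: "a \<in> V" "a \<noteq> r" "t = parent a" and b: "b \<in> V" "b \<noteq> r" "t = parent b"
    using children(4,5) unfolding up_edge_def by blast+
  have "parent t \<in> set (root_path t)"
    using root_path_parent[OF tV t(2)] self_in_root_path[OF parent_in_V[OF tV t(2)]] by simp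
  then have "parent t \<in> S"
    using span_root_path_closed[OF t(1)] by blast
  moreover have "parent t \<noteq> a" "parent t \<noteq> b"
    using parent_parent_neq[OF a(1,2)] parent_parent_neq[OF b(1,2)] a(3) b(3) t(2) by simp_all
  moreover have "E t a" "E t b" "E t (parent t)"
    using edge_parent[OF a(1,2)] edge_parent[OF b(1,2)] edge_parent[OF tV t(2)] a(3) b(3)
    by (simp_all add: symmetric_edges[OF tree_simple])
  ultimately have "{a, b, parent t} \<subseteq> {w \<in> S. E t w}"
    using children(1,2) by blast
  moreover have "finite {w \<in> S. E t w}"
    using span_subset_V finite_V by (auto intro: finite_subset)
  ultimately have "card {a, b, parent t} \<le> deg_in E S t"
    unfolding deg_in_def by (rule card_mono[rotated])
  then have "deg_in E S t \<ge> 3"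
    using children(3) \<open>parent t \<noteq> a\<close> \<open>parent t \<noteq> b\<close> by simp
  then show ?thesis
    using Y_eq t(1) by blast
qed

lemma interior_peak_in_Y:
  assumes p: "is_path E (ps @ t # qs)" "ps \<noteq> []" "qs \<noteq> []" "hd ps \<in> S" "last qs \<in> S"
    and up: "successively up_edge (ps @ [t])" and down: "successively up_edge (rev (t # qs))"
  shows "t \<in> Y"
proof (cases "t = r")
  case True
  then show ?thesis
    using root_in_Y by simp
next
  case False
  define a b where "a = last ps" and "b = hd qs"
  have edges: "up_edge a t" "up_edge b t"
    using up down p(2,3) unfolding a_def b_def
    by (simp_all add: successively_append_iff last_rev)
  have "set (ps @ [t]) \<subseteq> set (root_path (hd ps))" "set (rev (t # qs)) \<subseteq> set (root_path (last qs))"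
    using upward_path_subset[OF up] upward_path_subset[OF down] p(2-5) span_subset_V
    by (auto simp: hd_rev)
  then have "set (ps @ [t]) \<subseteq> S" "set (rev (t # qs)) \<subseteq> S"
    using span_root_path_closed p(4,5) by blast+
  then have "t \<in> S" "a \<in> S" "b \<in> S"
    using p(2,3) unfolding a_def b_def by auto
  moreover have "a \<noteq> b"
  proof -
    have "a \<in> set ps" "b \<in> set qs"
      using p(2,3) unfolding a_def b_def by simp_all
    then show ?thesis
      using p(1) by (auto simp: is_path_iff_successively)
  qed
  ultimately show ?thesis
    using branch_in_Y False edges by blast
qed

(* Meaningful for y \<noteq> r only: Y_parent r is hd [], an unspecified value. *)
definition Y_parent :: "'a \<Rightarrow> 'a" where
  "Y_parent y = hd (filter (\<lambda>z. z \<in> Y) (tl (root_path y)))"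

lemma Y_parent_eqI:
  "root_path y = y # xs @ b # ys \<Longrightarrow> set xs \<inter> Y = {} \<Longrightarrow> b \<in> Y \<Longrightarrow> Y_parent y = b"
  unfolding Y_parent_def by (simp add: disjoint_iff filter_False)

lemma Y_parent_in_Y:
  assumes "y \<in> V" "y \<noteq> r"
  shows "Y_parent y \<in> Y"
proof -
  have "r \<in> set (tl (root_path y))"
    using root_path_parent[OF assms] root_in_root_path[OF parent_in_V[OF assms]] by simp
  then have "filter (\<lambda>z. z \<in> Y) (tl (root_path y)) \<noteq> []"
    using root_in_Y by (simp add: filter_empty_conv) blast
  then have "Y_parent y \<in> set (filter (\<lambda>z. z \<in> Y) (tl (root_path y)))"
    unfolding Y_parent_def by (rule hd_in_set)
  then show ?thesis
    by simp
qed

lemma upward_path_Y_parent: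
  assumes up: "successively up_edge q" "q \<noteq> []" and ends: "hd q = u" "last q = v" "u \<noteq> v"
    and "u \<in> V" "v \<in> Y" and avoid: "\<forall>w\<in>set q. w \<noteq> u \<and> w \<noteq> v \<longrightarrow> w \<notin> Y"
  shows "u \<noteq> r \<and> Y_parent u = v"
proof -
  obtain rest where prefix: "root_path u = q @ rest"
    using upward_path_prefix[OF up] ends(1) \<open>u \<in> V\<close> by blast
  obtain mid where q: "q = u # mid @ [v]"
    using up(2) ends by (cases q; cases "tl q" rule: rev_cases) auto
  have "distinct (root_path u)"
    using is_path_root_path[OF \<open>u \<in> V\<close>] by (simp add: is_path_iff_successively)
  then have "set mid \<inter> Y = {}"
    using avoid prefix q by auto
  then have "Y_parent u = v"
    using prefix q \<open>v \<in> Y\<close> by (intro Y_parent_eqI[of u mid v rest]) simp_all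
  moreover have "u \<noteq> r"
    using prefix q root_path_root by auto
  ultimately show ?thesis
    by blast
qed

lemma Y_parent_of_Y_free_path:
  assumes Y: "u \<in> Y" "v \<in> Y" "u \<noteq> v" and p: "is_path E p" "hd p = u" "last p = v"
    and avoid: "\<forall>w\<in>set p. w \<noteq> u \<and> w \<noteq> v \<longrightarrow> w \<notin> Y"
  shows "(u \<noteq> r \<and> Y_parent u = v) \<or> (v \<noteq> r \<and> Y_parent v = u)"
proof -
  obtain ps t qs where split: "p = ps @ t # qs"
    and up: "successively up_edge (ps @ [t])" and down: "successively up_edge (rev (t # qs))"
    using path_up_down[OF p(1)] by blast
  have uv_S: "u \<in> S" "v \<in> S" and uv_V: "u \<in> V" "v \<in> V"
    using Y Y_subset_span span_subset_V by auto
  have distinct: "distinct p"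
    using p(1) by (simp add: is_path_iff_successively)
  consider "qs = []" | "ps = []" | "ps \<noteq> []" "qs \<noteq> []"
    by blast
  then show ?thesis
  proof cases
    case 1
    then show ?thesis
      using upward_path_Y_parent[of p u v] split up p Y uv_V avoid by simp
  next
    case 2
    then have "rev p = rev qs @ [u]" "qs \<noteq> []"
      using split p Y(3) by auto
    then have "v \<noteq> r \<and> Y_parent v = u"
      using upward_path_Y_parent[of "rev p" v u] split down p Y uv_V avoid
      by (simp add: hd_rev last_rev)
    then show ?thesis
      by blast
  next
    case 3
    then have "hd ps = u" "last qs = v"
      using split p(2,3) by simp_all
    then have "t \<in> Y"
      using interior_peak_in_Y[of ps t qs] p(1) split 3 up down uv_S by simp
    moreover have "t \<notin> Y"
      using avoid distinct split 3 p(2,3) by auto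
    ultimately show ?thesis
      by blast
  qed
qed

lemma Y_child_through:
  assumes c: "c \<in> S" "up_edge c b" and "b \<in> Y"
  shows "\<exists>y\<in>Y - {r}. Y_parent y = b \<and> c \<in> set (root_path y)"
proof -
  obtain x where x: "x \<in> X" "c \<in> set (root_path x)"
    using c(1) span_eq_root_paths by blast
  have xV: "x \<in> V"
    using x(1) X_subset_V by blast
  have cV: "c \<in> V" "c \<noteq> r" and b: "b = parent c"
    using c(2) unfolding up_edge_def by blast+
  obtain pre post where split: "root_path x = pre @ c # post"
    using split_list[OF x(2)] by blast
  have "post = root_path b"
    using root_path_suffix[OF xV split] root_path_parent[OF cV] b by simp
  then have split': "root_path x = (pre @ [c]) @ b # tl (root_path b)"
    using split root_path_Cons[OF parent_in_V[OF cV]] b by simp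
  (* y is the last vertex of Y on the root path of x up to c; x itself is a candidate. *)
  have "x \<in> set (pre @ [c])"
    using hd_root_path[OF xV] split by (cases pre) auto
  then obtain ws1 y ws2 where ws: "pre @ [c] = ws1 @ y # ws2" "y \<in> Y" "\<forall>z\<in>set ws2. z \<notin> Y"
    using x(1) X_subset_Y split_list_last_propE[of "pre @ [c]" "\<lambda>z. z \<in> Y"] by blast
  then have root_path_y: "root_path y = y # ws2 @ b # tl (root_path b)"
    using root_path_suffix[OF xV, of ws1 y] split' by simp
  have "set ws2 \<inter> Y = {}"
    using ws(3) by blast
  then have "Y_parent y = b"
    using Y_parent_eqI[OF root_path_y] \<open>b \<in> Y\<close> by blast
  moreover have "y \<noteq> r"
    using root_path_y root_path_root by auto
  moreover have "c = last (y # ws2)"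
    using ws(1) by (metis last_appendR last_snoc list.distinct(1))
  then have "c \<in> set (root_path y)"
    using root_path_y by simp
  ultimately show ?thesis
    using ws(2) by blast
qed

lemma two_children_in_span:
  assumes "b \<in> Y" "b \<notin> X"
  shows "2 \<le> card {c \<in> S. up_edge c b}"
proof -
  define C where "C = {c \<in> S. up_edge c b}"
  have finite_C: "finite C"
    using span_subset_V finite_V finite_subset unfolding C_def by fastforce
  have degree: "3 \<le> card {w \<in> S. E b w}"
    using assms Y_eq unfolding deg_in_def by auto
  have "{w \<in> S. E b w} \<subseteq> insert (parent b) C"
    using edge_up_or_down unfolding C_def up_edge_def by blast
  then have "card {w \<in> S. E b w} \<le> card (insert (parent b) C)"
    using finite_C by (intro card_mono) auto
  also have "\<dots> \<le> Suc (card C)"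
    using finite_C by (simp add: card_insert_if)
  finally show ?thesis
    using degree unfolding C_def by linarith
qed

lemma two_Y_children:
  assumes "b \<in> Y" "b \<notin> X"
  shows "2 \<le> card {y \<in> Y - {r}. Y_parent y = b}"
proof -
  define C where "C = {c \<in> S. up_edge c b}"
  define F where "F = {y \<in> Y - {r}. Y_parent y = b}"
  have "\<forall>c\<in>C. \<exists>y\<in>F. c \<in> set (root_path y)"
    using Y_child_through \<open>b \<in> Y\<close> unfolding C_def F_def by blast
  then obtain g where g: "\<And>c. c \<in> C \<Longrightarrow> g c \<in> F \<and> c \<in> set (root_path (g c))"
    by metis
  have "inj_on g C"
  proof (rule inj_onI)
    fix c c' assume c: "c \<in> C" "c' \<in> C" "g c = g c'"
    have "g c \<in> V"
      using g[OF c(1)] Y_subset_span span_subset_V unfolding F_def by blast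
    moreover have "c \<in> set (root_path (g c))" "c' \<in> set (root_path (g c))"
      using g c by metis+
    moreover have "c \<noteq> r" "c' \<noteq> r" "parent c = parent c'"
      using c(1,2) unfolding C_def up_edge_def by auto
    ultimately show "c = c'"
      by (rule root_path_child_unique)
  qed
  then have "card C \<le> card F"
    using g finite_Y unfolding F_def by (intro card_inj_on_le) auto
  then show ?thesis
    using two_children_in_span[OF assms] unfolding C_def F_def by linarith
qed

lemma card_Y_le: "card Y + 1 \<le> 2 * card X"
proof -
  define C where "C = Y - {r}"
  define fibre where "fibre b = {y \<in> C. Y_parent y = b}" for b
  have card_C: "card C + 1 = card Y"
    unfolding C_def using root_in_Y finite_Y card_Suc_Diff1 by fastforce
  have "Y_parent ` C \<subseteq> Y"
    unfolding C_def using Y_parent_in_Y Y_subset_span span_subset_V by blast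
  then have "(\<Sum>b\<in>Y. card (fibre b)) = card C"
    using sum.group[of C Y Y_parent "\<lambda>_. 1::nat"] finite_Y unfolding C_def fibre_def by simp
  moreover have "(\<Sum>b\<in>Y - X. card (fibre b)) \<le> (\<Sum>b\<in>Y. card (fibre b))"
    using finite_Y by (intro sum_mono2) auto
  moreover have "(\<Sum>b\<in>Y - X. 2) \<le> (\<Sum>b\<in>Y - X. card (fibre b))"
    using two_Y_children unfolding fibre_def C_def by (intro sum_mono) auto
  moreover have "card (Y - X) + card X = card Y"
    using card_Diff_subset[OF finite_subset[OF X_subset_Y finite_Y] X_subset_Y]
      card_mono[OF finite_Y X_subset_Y] by simp
  ultimately show ?thesis
    using card_C by simp
qed

lemma card_Y_union_Y_free_path_points:
  fixes m :: "'a \<Rightarrow> 'a \<Rightarrow> 'a"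
  assumes m_sym: "\<forall>u\<in>Y. \<forall>v\<in>Y. m u v = m v u"
  shows "card (Y \<union> {m u v | u v. u \<in> Y \<and> v \<in> Y \<and> path_interior E u v \<noteq> {} \<and>
                                   path_interior E u v \<inter> Y = {}}) + 3 \<le> 4 * card X"
    (is "card (Y \<union> ?M) + 3 \<le> _")
proof -
  have "?M \<subseteq> (\<lambda>y. m y (Y_parent y)) ` (Y - {r})"
  proof
    fix z assume "z \<in> ?M"
    then obtain u v where uv: "z = m u v" "u \<in> Y" "v \<in> Y"
      and gap: "path_interior E u v \<noteq> {}" "path_interior E u v \<inter> Y = {}"
      by blast
    then obtain w p where p: "is_path E p" "hd p = u" "last p = v" "w \<in> set p" "w \<noteq> u" "w \<noteq> v"
      unfolding path_interior_def by blast
    have "u \<noteq> v"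
    proof
      assume "u = v"
      then have "p = [u]"
        using is_path_hd_eq_last[OF p(1)] p(2,3) by simp
      then show False
        using p(4,5) by simp
    qed
    moreover have "\<forall>w\<in>set p. w \<noteq> u \<and> w \<noteq> v \<longrightarrow> w \<notin> Y"
      using gap(2) p(1-3) unfolding path_interior_def by blast
    ultimately have "(u \<noteq> r \<and> Y_parent u = v) \<or> (v \<noteq> r \<and> Y_parent v = u)"
      using Y_parent_of_Y_free_path uv(2,3) p(1-3) by blast
    then show "z \<in> (\<lambda>y. m y (Y_parent y)) ` (Y - {r})"
      using uv m_sym by force
  qed
  then have "card ?M \<le> card (Y - {r})"
    using finite_Y by (meson card_image_le card_mono finite_Diff finite_imageI le_trans)
  moreover have "card (Y - {r}) + 1 = card Y"
    using root_in_Y finite_Y card_Suc_Diff1 by fastforce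
  moreover have "card (Y \<union> ?M) \<le> card Y + card ?M"
    by (rule card_Un_le)
  ultimately show ?thesis
    using card_Y_le by linarith
qed

end

lemma heavy_module_subset: "heavy_module V E c t H \<Longrightarrow> H \<subseteq> V"
  unfolding heavy_module_def by blast

lemma finite_heavy_modules: "finite V \<Longrightarrow> finite {H. heavy_module V E c t H}"
  by (rule finite_subset[of _ "Pow V"]) (auto dest: heavy_module_subset)

lemma k_t_le_k_max:
  assumes "finite V" "0 \<le> t"
  shows "k_t V E c t \<le> k_max V E c"
proof -
  have "k_t V E c s \<le> card (Pow V)" for s
    unfolding k_t_def using assms(1) by (intro card_mono) (auto dest: heavy_module_subset)
  then have "{k_t V E c s | s. 0 \<le> s} \<subseteq> {..card (Pow V)}"
    by auto
  then have "finite {k_t V E c s | s. 0 \<le> s}"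
    by (rule finite_subset) simp
  then show ?thesis
    unfolding k_max_def using assms(2) by (intro Max_ge) auto
qed

lemma k_max_pos:
  assumes "is_tree V E" "\<forall>v\<in>V. 0 < c v"
  shows "1 \<le> k_max V E c"
proof -
  have finite_V: "finite V"
    using assms(1) unfolding is_tree_def simple_graph_def by blast
  have "heavy_module V E c 0 V"
    using assms unfolding heavy_module_def is_tree_def by auto
  then have "0 < k_t V E c 0"
    unfolding k_t_def using finite_heavy_modules[OF finite_V] card_gt_0_iff by blast
  then show ?thesis
    using k_t_le_k_max[OF finite_V, of 0 E c] by simp
qed

lemma card_transversal_le_k_t:
  assumes "finite V" and X: "X \<subseteq> \<Union>{H. heavy_module V E c t H}"
    and one: "\<forall>H. heavy_module V E c t H \<longrightarrow> card (X \<inter> H) = 1"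
  shows "card X \<le> k_t V E c t"
proof -
  define module_of where "module_of x = (SOME H. heavy_module V E c t H \<and> x \<in> H)" for x
  have module_of: "heavy_module V E c t (module_of x) \<and> x \<in> module_of x" if "x \<in> X" for x
  proof -
    have "\<exists>H. heavy_module V E c t H \<and> x \<in> H"
      using X that by blast
    then show ?thesis
      unfolding module_of_def by (rule someI_ex)
  qed
  have "inj_on module_of X"
  proof (rule inj_onI)
    fix x y assume xy: "x \<in> X" "y \<in> X" "module_of x = module_of y"
    then have "card (X \<inter> module_of x) = 1" "x \<in> X \<inter> module_of x" "y \<in> X \<inter> module_of x"
      using one module_of by auto
    then show "x = y"
      by (metis card_1_singletonE singletonD)
  qed
  then show ?thesis
    unfolding k_t_def using module_of finite_heavy_modules[OF assms(1)]
    by (intro card_inj_on_le) auto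
qed

theorem lemma11:
  fixes V :: "'a set" and E :: "'a \<Rightarrow> 'a \<Rightarrow> bool" and c :: "'a \<Rightarrow> real" and a :: real
    and X Y Z :: "'a set" and m :: "'a \<Rightarrow> 'a \<Rightarrow> 'a"
  assumes tree: "is_tree V E"
    and cpos: "\<forall>v\<in>V. c v > 0"
    and a_nonneg: "a \<ge> 0"
    and light: "\<exists>v\<in>V. c v \<le> a"
    and X_sub: "X \<subseteq> \<Union>{H. heavy_module V E c a H}"
    and X_one: "\<forall>H. heavy_module V E c a H \<longrightarrow> card (X \<inter> H) = 1"
    and Y_def: "Y = X \<union> {v \<in> span_vertices E X. deg_in E (span_vertices E X) v \<ge> 3}"
    and m_sym: "\<forall>u\<in>Y. \<forall>v\<in>Y. m u v = m v u"
    and m_in: "\<forall>u\<in>Y. \<forall>v\<in>Y. path_interior E u v \<noteq> {} \<and> path_interior E u v \<inter> Y = {} \<longrightarrow>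
                 m u v \<in> path_interior E u v \<and> (\<forall>w\<in>path_interior E u v. c (m u v) \<le> c w)"
    and Z_def: "Z = Y \<union> {m u v | u v. u \<in> Y \<and> v \<in> Y \<and> path_interior E u v \<noteq> {} \<and>
                                   path_interior E u v \<inter> Y = {}}"
  shows "int (card Z) \<le> 4 * int (k_max V E c) - 3"
proof -
  have finite_V: "finite V"
    using tree unfolding is_tree_def simple_graph_def by blast
  have card_X: "card X \<le> k_max V E c"
    using card_transversal_le_k_t[OF finite_V X_sub X_one] k_t_le_k_max[OF finite_V a_nonneg, of E c]
    by linarith
  show ?thesis
  proof (cases "X = {}")
    case True
    then have "Z = {}"
      using Y_def Z_def unfolding span_vertices_def by simp
    then show ?thesis
      using k_max_pos[OF tree cpos] by simp
  next
    case False
    then obtain r where "r \<in> X"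
      by blast
    moreover have "X \<subseteq> V"
      using X_sub heavy_module_subset by blast
    ultimately interpret rooted_span V E r X Y
      using tree Y_def by unfold_locales auto
    have "card Z + 3 \<le> 4 * card X"
      using card_Y_union_Y_free_path_points[OF m_sym] Z_def by simp
    then show ?thesis
      using card_X by linarith
  qed
qed

end
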